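(* Consider the rooted labelled tree (Catalan generating tree) in which the root has label $s\ge 2$ and every node with label $j$ has exactly $j$ children, with labels $2,3,\dots,j+1$. For $m\ge 1$ let $X^{(s)}_m$ be the label of a node chosen uniformly at random among the nodes at depth $m$ (the root having depth $0$). Then $$\mathbf{E}\big[X^{(s)}_m\big]<4+\frac{2s}{m}.$$
   Context: The labels record the number of valid insertion positions: in the tree of $321$-avoiding permutations built by inserting the new maximal entry, a permutation with $j$ valid insertion positions has $j$ children, whose numbers of valid insertion positions are $2,3,\dots,j+1$. *)

theory Defs
  imports Complex_Main
begin

fun level_labels :: "nat \<Rightarrow> nat \<Rightarrow> nat list" where
  "level_labels s 0 = [s]"
| "level_labels s (Suc m) = concat (map (\<lambda>j. [2..<j+2]) (level_labels s m))"

definition expected_label :: "nat \<Rightarrow> nat \<Rightarrow> real" where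
  "expected_label s m =
     (\<Sum>x\<leftarrow>level_labels s m. real x) / real (length (level_labels s m))"

end

theory Submission
  imports Defs
begin

text \<open>Let \<open>N(s,m)\<close> be the number of nodes at depth \<open>m\<close> below a root labelled \<open>s\<close>.
  Splitting off the root gives \<open>N(s,m+1) = \<Sum>i=2..s+1. N(i,m)\<close>, which is solved by the ballot
  numbers \<open>N(s,m) = s (s+2m-1)! / (m! (s+m)!)\<close>. Since a node labelled \<open>j\<close> has \<open>j\<close> children,
  the labels at depth \<open>m\<close> sum to \<open>N(s,m+1)\<close>, so the expected label is
  \<open>N(s,m+1) / N(s,m) = (s+2m+1)(s+2m) / ((m+1)(s+m+1))\<close>, and this is less than
  \<open>2(s+2m)/m = 4 + 2s/m\<close>.\<close>

lemma concat_map_concat: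
  "concat (map f (concat xss)) = concat (map (\<lambda>xs. concat (map f xs)) xss)"
  by (induction xss) auto

lemma level_labels_Suc_subtrees:
  "level_labels s (Suc m) = concat (map (\<lambda>j. level_labels j m) [2..<s+2])"
proof (induction m arbitrary: s)
  case 0
  then show ?case by (simp add: map_concat)
next
  case (Suc m)
  let ?children = "\<lambda>j. [2..<j+2]"
  have "level_labels s (Suc (Suc m)) = concat (map ?children (level_labels s (Suc m)))"
    by (rule level_labels.simps(2))
  also have "\<dots> = concat (map (\<lambda>i. concat (map ?children (level_labels i m))) [2..<s+2])"
    by (simp only: Suc.IH concat_map_concat map_map comp_def)
  also have "\<dots> = concat (map (\<lambda>i. level_labels i (Suc m)) [2..<s+2])"
    by (simp only: level_labels.simps)
  finally show ?case .
qed

lemma sum_list_level_labels: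
  "(\<Sum>x\<leftarrow>level_labels s m. real x) = real (length (level_labels s (Suc m)))"
  by (simp add: length_concat sum_list_of_nat o_def del: upt_Suc)

text \<open>At \<open>j = 0\<close> the truncated subtraction is harmless because of the factor \<open>j\<close>.\<close>
definition ballot_number :: "nat \<Rightarrow> nat \<Rightarrow> real" where
  "ballot_number j m = real j * fact (j + 2*m - 1) / (fact m * fact (j + m))"

lemma ballot_number_times_facts:
  "ballot_number j m * (fact m * fact (j + m)) = real j * fact (j + 2*m - 1)"
  by (simp add: ballot_number_def)

lemma ballot_number_pos: "j \<ge> 1 \<Longrightarrow> ballot_number j m > 0"
  by (simp add: ballot_number_def)

lemma ballot_number_0: "j \<ge> 1 \<Longrightarrow> ballot_number j 0 = 1"
  by (cases j) (simp_all add: ballot_number_def)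

lemma ballot_number_Suc_Suc:
  "ballot_number (Suc j) (Suc m) = ballot_number j (Suc m) + ballot_number (j + 2) m"
proof -
  define P :: real where "P = fact (Suc m) * fact (j + m + 2)"
  have lhs:
    "ballot_number (Suc j) (Suc m) * P = (j + 1) * (j + 2*m + 2) * (fact (j + 2*m + 1) :: real)"
    using ballot_number_times_facts[of "Suc j" "Suc m"] by (simp add: P_def algebra_simps)
  have "ballot_number j (Suc m) * P
      = ballot_number j (Suc m) * (fact (Suc m) * fact (j + Suc m)) * (j + m + 2)"
    by (simp add: P_def algebra_simps)
  also have "\<dots> = j * (j + m + 2) * (fact (j + 2*m + 1) :: real)"
    by (subst ballot_number_times_facts) (simp add: algebra_simps)
  finally have rhs1:
    "ballot_number j (Suc m) * P = j * (j + m + 2) * (fact (j + 2*m + 1) :: real)" .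
  have "ballot_number (j + 2) m * P
      = ballot_number (j + 2) m * (fact m * fact (j + 2 + m)) * (m + 1)"
    by (simp add: P_def algebra_simps)
  also have "\<dots> = (j + 2) * (m + 1) * (fact (j + 2*m + 1) :: real)"
    by (subst ballot_number_times_facts) (simp add: algebra_simps)
  finally have rhs2:
    "ballot_number (j + 2) m * P = (j + 2) * (m + 1) * (fact (j + 2*m + 1) :: real)" .
  have "ballot_number (Suc j) (Suc m) * P
      = (ballot_number j (Suc m) + ballot_number (j + 2) m) * P"
    unfolding distrib_right lhs rhs1 rhs2 by (simp add: algebra_simps)
  moreover have "P \<noteq> 0" by (simp add: P_def)
  ultimately show ?thesis by simp
qed

lemma sum_list_ballot_number_upt:
  "(\<Sum>i\<leftarrow>[2..<s+2]. ballot_number i m) = ballot_number s (Suc m)"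
proof (induction s)
  case 0
  then show ?case by (simp add: ballot_number_def)
next
  case (Suc s)
  then show ?case by (simp add: ballot_number_Suc_Suc)
qed

lemma length_level_labels:
  "s \<ge> 1 \<Longrightarrow> real (length (level_labels s m)) = ballot_number s m"
proof (induction m arbitrary: s)
  case 0
  then show ?case by (simp add: ballot_number_0)
next
  case (Suc m)
  have "real (length (level_labels s (Suc m)))
      = (\<Sum>i\<leftarrow>[2..<s+2]. real (length (level_labels i m)))"
    by (simp add: level_labels_Suc_subtrees length_concat o_def
        del: level_labels.simps(2) flip: sum_list_of_nat)
  also have "\<dots> = (\<Sum>i\<leftarrow>[2..<s+2]. ballot_number i m)"
    by (intro arg_cong[where f = sum_list] map_cong) (auto intro: Suc.IH)
  finally show ?case by (simp only: sum_list_ballot_number_upt)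
qed

lemma ballot_number_Suc_ratio:
  assumes "s \<ge> 1"
  shows "ballot_number s (Suc m) * real ((m + 1) * (s + m + 1))
       = ballot_number s m * real ((s + 2*m + 1) * (s + 2*m))"
proof -
  obtain k where s: "s = Suc k" using assms by (cases s) auto
  define Q :: real where "Q = fact (Suc m) * fact (s + Suc m)"
  have lhs:
    "ballot_number s (Suc m) * Q = s * (s + 2*m + 1) * (s + 2*m) * (fact (k + 2*m) :: real)"
    using ballot_number_times_facts[of s "Suc m"] by (simp add: Q_def s algebra_simps)
  have "ballot_number s m * Q
      = ballot_number s m * (fact m * fact (s + m)) * real ((m + 1) * (s + m + 1))"
    by (simp add: Q_def algebra_simps)
  also have "\<dots> = s * (fact (k + 2*m) :: real) * real ((m + 1) * (s + m + 1))"
    by (subst ballot_number_times_facts) (simp add: s algebra_simps)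
  finally have rhs:
    "ballot_number s m * Q = s * (fact (k + 2*m) :: real) * real ((m + 1) * (s + m + 1))" .
  have "ballot_number s (Suc m) * real ((m + 1) * (s + m + 1)) * Q
      = (ballot_number s (Suc m) * Q) * real ((m + 1) * (s + m + 1))"
    by (simp only: mult_ac)
  also have "\<dots> = (ballot_number s m * Q) * real ((s + 2*m + 1) * (s + 2*m))"
    unfolding lhs rhs by (simp add: algebra_simps)
  also have "\<dots> = ballot_number s m * real ((s + 2*m + 1) * (s + 2*m)) * Q"
    by (simp only: mult_ac)
  finally show ?thesis
    by (simp add: Q_def)
qed

lemma expected_label_closed_form:
  assumes "s \<ge> 1"
  shows "expected_label s m = real ((s + 2*m + 1) * (s + 2*m)) / real ((m + 1) * (s + m + 1))"
proof -
  have "expected_label s m = ballot_number s (Suc m) / ballot_number s m"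
    using assms by (simp add: expected_label_def sum_list_level_labels length_level_labels
        del: level_labels.simps(2))
  also have "\<dots> = real ((s + 2*m + 1) * (s + 2*m)) / real ((m + 1) * (s + m + 1))"
    using ballot_number_Suc_ratio[OF assms, of m] ballot_number_pos[OF assms, of m]
    by (simp add: divide_simps del: of_nat_mult of_nat_add)
  finally show ?thesis .
qed

lemma level_growth_ratio_less:
  fixes s m :: nat
  assumes "m \<ge> 1"
  shows "real ((s + 2*m + 1) * (s + 2*m)) / real ((m + 1) * (s + m + 1)) < 4 + 2 * real s / real m"
proof -
  define X where "X = real ((s + 2*m + 1) * (s + 2*m))"
  define Y where "Y = real ((m + 1) * (s + m + 1))"
  have "(4 * real m + 2 * real s) * Y - real m * X
      = real ((s + 2*m) * (m * s + 3 * m + 2 * s + 2))"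
    by (simp add: X_def Y_def algebra_simps)
  also have "\<dots> > 0" using assms by (simp del: of_nat_mult of_nat_add)
  finally have "real m * X < (4 * real m + 2 * real s) * Y" by simp
  moreover have "Y > 0" "real m > 0"
    using assms by (simp_all add: Y_def del: of_nat_mult of_nat_add)
  ultimately show ?thesis
    unfolding X_def[symmetric] Y_def[symmetric] by (simp add: field_simps)
qed

theorem mainTheorem6:
  fixes s m :: nat
  assumes "s \<ge> 2" and "m \<ge> 1"
  shows "expected_label s m < 4 + 2 * real s / real m"
  using expected_label_closed_form[of s m] level_growth_ratio_less[OF assms(2)] assms(1) by simp

end
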